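(* Let $r\ge0$ and $p=(p_1,\dots,p_k)\in\mathcal{P}_r$, with extended partition $p^\sharp=(p_1,\dots,p_{k'})$ and symbol $\Lambda_p$ as in the context. Say that row $i$ ($1\le i\le k'$) of $p^\sharp$ ends in a square of $\mathcal{HC}(p)$ if $s_{i,p_i}\in\mathcal{HC}(p)$ or $s_{i,p_i+1}\in\mathcal{HC}(p)$ (i.e., the row terminates in a filled square of $\mathcal{HC}(p)$, or is immediately followed by an empty one). Then the assignment $i\mapsto\widetilde p_i$ identifies the set $Z_1(\Lambda_p)$ of single entries of $\Lambda_p$ with the set of rows of $p^\sharp$ ending in a (perhaps empty) square of $\mathcal{HC}(p)$; this gives a bijection $Z_1(\Lambda_p)\leftrightarrow\mathcal{HC}(p)$.
   Context: A partition $p=(p_1\ge\dots\ge p_k>0)$ is identified with its Young diagram $Y_p$ (rows from the top, columns from the left, starting at $1$); $s_{ij}$ is the square in row $i$, column $j$ (possibly outside $Y_p$). Rank: repeatedly removing dominos (two adjacent squares) so that a Young diagram remains ends at the staircase $(r,r-1,\dots,1)$ for a unique $r\ge0$, the rank of $p$; $\mathcal{P}_r$ is the set of partitions of rank $r$. For $p\in\mathcal{P}_r$, $\mathcal{HC}(p)$ is the set of squares $s_{ij}$ with $i+j\equiv r\pmod2$, $i+j>r+1$, such that adding $s_{ij}$ to $Y_p$ or removing it from $Y_p$ yields a Young diagram; such a square is filled if it lies in $Y_p$ and empty otherwise. Symbols: a symbol of defect $d$ is a two-row array with top row a strictly increasing sequence $\lambda_1<\dots<\lambda_{N+d}$ and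 bottom row a strictly increasing sequence $\mu_1<\dots<\mu_N$ of non-negative integers, considered up to the equivalence generated by replacing it with the symbol with top row $0,\lambda_1+1,\dots,\lambda_{N+d}+N+d$ and bottom row $0,\mu_1+1,\dots,\mu_N+N$. For a symbol $\Lambda$, $Z_1(\Lambda)$ is the set of entries appearing in exactly one of its rows and $Z_2(\Lambda)$ the set of entries appearing in both rows. Given $p=(p_1,\dots,p_k)\in\mathcal{P}_r$, form $p^\sharp=(p_1,\dots,p_{k'})$ by appending one part equal to $0$ if $r\equiv k\pmod 2$ (so $k'=k+1$), and otherwise $p^\sharp=p$ ($k'=k$). The numbers $p_i+k'-i$ ($1\le i\le k'$) split into odd ones $2\mu_j+1$ and even ones $2\lambda_j$; the symbol $\Lambda_p$ has top row the $\lambda_j$ and bottom row the $\mu_j$ (it has defect $r+1$). $\widetilde p_i$ denotes the entry of $\Lambda_p$ determined by the part $p_i$ of $p^\sharp$ (i.e. $\widetilde p_i=\lfloor (p_i+k'-i)/2\rfloor$). *)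

theory Defs
  imports Main
begin

(* A partition is a list of positive naturals, weakly decreasing. Parts are 1-indexed:
   part p i = p_i = p ! (i-1). A square s_ij is the pair (i,j), rows/columns from 1. *)

definition is_partition :: "nat list \<Rightarrow> bool" where
  "is_partition p \<longleftrightarrow> sorted (rev p) \<and> (\<forall>x\<in>set p. 0 < x)"

definition part :: "nat list \<Rightarrow> nat \<Rightarrow> nat" where
  "part p i = p ! (i - 1)"

definition young_diagram :: "nat list \<Rightarrow> (nat \<times> nat) set" where
  "young_diagram p = {(i, j). 1 \<le> i \<and> i \<le> length p \<and> 1 \<le> j \<and> j \<le> part p i}"

definition is_young :: "(nat \<times> nat) set \<Rightarrow> bool" where
  "is_young S \<longleftrightarrow> finite S \<and> (\<forall>(i, j)\<in>S. 1 \<le> i \<and> 1 \<le> j \<and>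
      (\<forall>i' j'. 1 \<le> i' \<and> i' \<le> i \<and> 1 \<le> j' \<and> j' \<le> j \<longrightarrow> (i', j') \<in> S))"

definition adjacent :: "nat \<times> nat \<Rightarrow> nat \<times> nat \<Rightarrow> bool" where
  "adjacent a b \<longleftrightarrow> (fst a = fst b \<and> (snd b = snd a + 1 \<or> snd a = snd b + 1)) \<or>
                     (snd a = snd b \<and> (fst b = fst a + 1 \<or> fst a = fst b + 1))"

definition domino_step :: "(nat \<times> nat) set \<Rightarrow> (nat \<times> nat) set \<Rightarrow> bool" where
  "domino_step S T \<longleftrightarrow> (\<exists>a b. a \<in> S \<and> b \<in> S \<and> adjacent a b \<and>
      T = S - {a, b} \<and> is_young T)"

definition staircase :: "nat \<Rightarrow> nat list" where
  "staircase r = rev [1..<r+1]"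

definition has_rank :: "nat \<Rightarrow> nat list \<Rightarrow> bool" where
  "has_rank r p \<longleftrightarrow> is_partition p \<and>
     domino_step\<^sup>*\<^sup>* (young_diagram p) (young_diagram (staircase r))"

definition HC :: "nat \<Rightarrow> nat list \<Rightarrow> (nat \<times> nat) set" where
  "HC r p = {(i, j). 1 \<le> i \<and> 1 \<le> j \<and> (i + j) mod 2 = r mod 2 \<and> i + j > r + 1 \<and>
      (((i, j) \<notin> young_diagram p \<and> is_young (insert (i, j) (young_diagram p))) \<or>
       ((i, j) \<in> young_diagram p \<and> is_young (young_diagram p - {(i, j)})))}"

definition psharp :: "nat \<Rightarrow> nat list \<Rightarrow> nat list" where
  "psharp r p = (if r mod 2 = length p mod 2 then p @ [0] else p)"

definition beta :: "nat \<Rightarrow> nat list \<Rightarrow> nat \<Rightarrow> nat" where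
  "beta r p i = part (psharp r p) i + length (psharp r p) - i"

(* symbol Lambda_p: top row (set of lambda_j) and bottom row (set of mu_j);
   rows are strictly increasing sequences, represented by their finite sets *)
definition sym_top :: "nat \<Rightarrow> nat list \<Rightarrow> nat set" where
  "sym_top r p = {beta r p i div 2 | i. 1 \<le> i \<and> i \<le> length (psharp r p) \<and> even (beta r p i)}"

definition sym_bot :: "nat \<Rightarrow> nat list \<Rightarrow> nat set" where
  "sym_bot r p = {(beta r p i - 1) div 2 | i. 1 \<le> i \<and> i \<le> length (psharp r p) \<and> odd (beta r p i)}"

definition Z1 :: "nat set \<Rightarrow> nat set \<Rightarrow> nat set" where
  "Z1 T B = (T - B) \<union> (B - T)"

definition ptilde :: "nat \<Rightarrow> nat list \<Rightarrow> nat \<Rightarrow> nat" where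
  "ptilde r p i = beta r p i div 2"

definition HC_rows :: "nat \<Rightarrow> nat list \<Rightarrow> nat set" where
  "HC_rows r p = {i. 1 \<le> i \<and> i \<le> length (psharp r p) \<and>
      ((i, part (psharp r p) i) \<in> HC r p \<or> (i, part (psharp r p) i + 1) \<in> HC r p)}"

definition row_end_square :: "nat \<Rightarrow> nat list \<Rightarrow> nat \<Rightarrow> nat \<times> nat" where
  "row_end_square r p i = (if (i, part (psharp r p) i) \<in> HC r p
      then (i, part (psharp r p) i) else (i, part (psharp r p) i + 1))"

end

theory Submission
  imports Defs
begin

(* Colour the squares like a chessboard, s_ij having sign (-1)^(i+j). Removing a domino does not
   change the signed count, so for p of rank r it equals that of the staircase; in terms of the
   beta-numbers b_i = p_i + k' - i of p^sharp this says that exactly (k' + r + 1)/2 of them are even.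
   Row i can end in a square of HC(p) only at the square of the right colour: its last filled square
   if b_i is odd, the empty square after it if b_i is even. That square is removable, resp. addable,
   iff b_i - 1, resp. b_i + 1, is not a beta-number, i.e. iff b_i div 2 occurs in only one row of
   Lambda_p. The condition i + j > r + 1 comes for free from the count of even beta-numbers: each
   of them either belongs to one of the first i - 1 rows or is an even number not exceeding b_i. *)

section \<open>The chessboard colouring\<close>

definition checker_sum :: "(nat \<times> nat) set \<Rightarrow> int" where
  "checker_sum S = (\<Sum>(i, j)\<in>S. (-1) ^ (i + j))"

lemma checker_sum_domino_step:
  assumes "domino_step S T"
  shows "checker_sum S = checker_sum T"
proof -
  obtain a b where ab: "a \<in> S" "b \<in> S" "adjacent a b" "T = S - {a, b}" "is_young T"
    using assms unfolding domino_step_def by blast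
  have "finite T"
    using ab(5) unfolding is_young_def by blast
  have "a \<noteq> b" "even (fst a + snd a) \<longleftrightarrow> odd (fst b + snd b)"
    using ab(3) unfolding adjacent_def by auto
  then have opposite: "(-1::int) ^ (fst a + snd a) + (-1) ^ (fst b + snd b) = 0"
    by (auto simp: minus_one_power_iff)
  have "S = insert a (insert b T)" "a \<notin> insert b T" "b \<notin> T"
    using ab \<open>a \<noteq> b\<close> by auto
  then show ?thesis
    using \<open>finite T\<close> opposite unfolding checker_sum_def by (simp add: case_prod_beta)
qed

lemma checker_sum_rtranclp: "domino_step\<^sup>*\<^sup>* S T \<Longrightarrow> checker_sum S = checker_sum T"
  by (induction rule: rtranclp.induct) (auto dest: checker_sum_domino_step)

fun alt_row_sum :: "nat list \<Rightarrow> int" where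
  "alt_row_sum [] = 0"
| "alt_row_sum (x # xs) = of_bool (odd x) - alt_row_sum xs"

lemma young_diagram_Nil: "young_diagram [] = {}"
  by (auto simp: young_diagram_def)

lemma young_diagram_Cons:
  "young_diagram (x # xs) = (\<lambda>j. (1, j)) ` {1..x} \<union> (\<lambda>(i, j). (Suc i, j)) ` young_diagram xs"
proof -
  have "(i, j) \<in> young_diagram (x # xs) \<longleftrightarrow>
      (i, j) \<in> (\<lambda>j. (1, j)) ` {1..x} \<union> (\<lambda>(i, j). (Suc i, j)) ` young_diagram xs" for i j
  proof (cases i)
    case (Suc m)
    then show ?thesis
      by (cases m) (auto simp: young_diagram_def part_def image_iff)
  qed (auto simp: young_diagram_def)
  then show ?thesis by auto
qed

lemma finite_young_diagram: "finite (young_diagram xs)"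
  by (induction xs) (simp_all add: young_diagram_Nil young_diagram_Cons)

lemma checker_sum_young_diagram: "checker_sum (young_diagram xs) = alt_row_sum xs"
proof (induction xs)
  case Nil
  then show ?case by (simp add: young_diagram_Nil checker_sum_def)
next
  case (Cons x xs)
  let ?row = "(\<lambda>j. (1::nat, j)) ` {1..x}" and ?shift = "\<lambda>(i, j). (Suc i, j)"
  have row: "checker_sum ?row = of_bool (odd x)"
  proof -
    have "(\<Sum>j = 1..n. (-1::int) ^ Suc j) = of_bool (odd n)" for n
      by (induction n) auto
    then show ?thesis
      unfolding checker_sum_def by (subst sum.reindex) (auto simp: inj_on_def)
  qed
  have shift: "checker_sum (?shift ` young_diagram xs) = - checker_sum (young_diagram xs)"
    unfolding checker_sum_def
    by (subst sum.reindex) (auto simp: inj_on_def case_prod_beta sum_negf[symmetric] intro!: sum.cong)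
  have "?row \<inter> ?shift ` young_diagram xs = {}"
    by (auto simp: young_diagram_def)
  then have "checker_sum (young_diagram (x # xs)) = checker_sum ?row + checker_sum (?shift ` young_diagram xs)"
    unfolding young_diagram_Cons checker_sum_def using finite_young_diagram
    by (simp add: sum.union_disjoint)
  then show ?case
    using row shift Cons by simp
qed

lemma alt_row_sum_staircase: "2 * alt_row_sum (staircase r) = (if odd r then int r + 1 else - int r)"
  by (induction r) (auto simp: staircase_def)

lemma alt_row_sum_append_zero: "alt_row_sum (xs @ [0]) = alt_row_sum xs"
  by (induction xs) auto

section \<open>Beta-numbers\<close>

fun beta_list :: "nat list \<Rightarrow> nat list" where
  "beta_list [] = []"
| "beta_list (x # xs) = (x + length xs) # beta_list xs"

lemma length_beta_list [simp]: "length (beta_list xs) = length xs"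
  by (induction xs) auto

lemma nth_beta_list: "l < length xs \<Longrightarrow> beta_list xs ! l = xs ! l + length xs - Suc l"
  by (induction xs arbitrary: l) (auto simp: nth_Cons split: nat.split)

lemma alt_row_sum_beta_list:
  "2 * alt_row_sum xs = (if even (length xs)
     then int (length (filter even (beta_list xs))) - int (length (filter odd (beta_list xs)))
     else int (length (filter odd (beta_list xs))) - int (length (filter even (beta_list xs))) + 1)"
  by (induction xs) auto

abbreviation sharp_length :: "nat \<Rightarrow> nat list \<Rightarrow> nat" where
  "sharp_length r p \<equiv> length (psharp r p)"

lemma sharp_length_parity: "sharp_length r p mod 2 \<noteq> r mod 2"
  by (simp add: psharp_def) presburger

lemma sharp_length_bounds: "length p \<le> sharp_length r p" "sharp_length r p \<le> Suc (length p)"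
  by (auto simp: psharp_def)

(* Row lengths padded with zeros: beyond the list, part p i is an unspecified list element. *)
definition row_len :: "nat list \<Rightarrow> nat \<Rightarrow> nat" where
  "row_len p i = (if 1 \<le> i \<and> i \<le> length p then part p i else 0)"

lemma mem_young_diagram_iff: "(i, j) \<in> young_diagram p \<longleftrightarrow> 1 \<le> i \<and> 1 \<le> j \<and> j \<le> row_len p i"
  by (auto simp: young_diagram_def row_len_def)

lemma row_len_antimono:
  assumes "is_partition p" "1 \<le> i" "i \<le> i'"
  shows "row_len p i' \<le> row_len p i"
  using assms sorted_rev_nth_mono[of p "i - 1" "i' - 1"]
  by (auto simp: is_partition_def row_len_def part_def)

lemma row_len_pos_iff:
  assumes "is_partition p"
  shows "0 < row_len p i \<longleftrightarrow> 1 \<le> i \<and> i \<le> length p"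
  using assms by (auto simp: is_partition_def row_len_def part_def)

lemma part_psharp: "1 \<le> i \<Longrightarrow> i \<le> sharp_length r p \<Longrightarrow> part (psharp r p) i = row_len p i"
  by (auto simp: psharp_def row_len_def part_def nth_append)

lemma beta_add_index:
  "1 \<le> i \<Longrightarrow> i \<le> sharp_length r p \<Longrightarrow> beta r p i + i = row_len p i + sharp_length r p"
  by (simp add: beta_def part_psharp)

lemma beta_list_psharp: "beta_list (psharp r p) = map (beta r p) [1..<Suc (sharp_length r p)]"
  by (rule nth_equalityI) (auto simp del: upt_Suc simp: nth_beta_list beta_def part_def)

lemma beta_strict_antimono:
  assumes "is_partition p" "1 \<le> i" "i < i'" "i' \<le> sharp_length r p"
  shows "beta r p i' < beta r p i"
  using assms beta_add_index[of i r p] beta_add_index[of i' r p] row_len_antimono[of p i i']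
  by simp

lemma inj_on_beta: "is_partition p \<Longrightarrow> inj_on (beta r p) {1..sharp_length r p}"
  by (rule inj_onI) (metis atLeastAtMost_iff beta_strict_antimono less_irrefl linorder_neqE_nat)

lemma card_even_beta:
  assumes "has_rank r p"
  shows "2 * card {i \<in> {1..sharp_length r p}. even (beta r p i)} = sharp_length r p + r + 1"
proof -
  define n where "n = sharp_length r p"
  define E where "E = card {i \<in> {1..n}. even (beta r p i)}"
  define Od where "Od = card {i \<in> {1..n}. odd (beta r p i)}"
  have "alt_row_sum p = alt_row_sum (staircase r)"
    using assms checker_sum_rtranclp checker_sum_young_diagram unfolding has_rank_def by metis
  moreover have "alt_row_sum (psharp r p) = alt_row_sum p"
    by (simp add: psharp_def alt_row_sum_append_zero)
  moreover have "length (filter P (beta_list (psharp r p))) = card {i \<in> {1..n}. P (beta r p i)}" for P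
  proof -
    have "{i. P (beta r p i)} \<inter> {1..<Suc n} = {i \<in> {1..n}. P (beta r p i)}"
      by auto
    then show ?thesis
      unfolding beta_list_psharp n_def by (simp del: upt_Suc add: distinct_length_filter)
  qed
  ultimately have "2 * alt_row_sum (staircase r) = (if even n then int E - int Od else int Od - int E + 1)"
    using alt_row_sum_beta_list[of "psharp r p"] by (simp add: E_def Od_def n_def)
  then have "int E - int Od = int r + 1"
    using alt_row_sum_staircase[of r] sharp_length_parity[of r p] unfolding n_def[symmetric]
    by (auto split: if_splits) presburger+
  moreover have "E + Od = n"
  proof -
    have "{i \<in> {1..n}. even (beta r p i)} \<union> {i \<in> {1..n}. odd (beta r p i)} = {1..n}"
      by auto
    then show ?thesis
      unfolding E_def Od_def by (subst card_Un_disjoint[symmetric]) auto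
  qed
  ultimately show ?thesis
    unfolding E_def n_def by linarith
qed

definition beta_set :: "nat \<Rightarrow> nat list \<Rightarrow> nat set" where
  "beta_set r p = beta r p ` {1..sharp_length r p}"

lemma beta_eq_Suc_beta_iff:
  assumes "is_partition p" "i \<in> {1..sharp_length r p}" "i' \<in> {1..sharp_length r p}"
  shows "beta r p i' = Suc (beta r p i) \<longleftrightarrow> Suc i' = i \<and> row_len p i' = row_len p i"
proof
  assume adjacent: "beta r p i' = Suc (beta r p i)"
  then have "i' < i"
    using assms beta_strict_antimono[OF assms(1), of i i' r] by (cases i i' rule: linorder_cases) auto
  moreover have "\<not> Suc i' < i"
    using assms adjacent beta_strict_antimono[OF assms(1), of i' "Suc i'" r]
      beta_strict_antimono[OF assms(1), of "Suc i'" i r] by auto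
  ultimately show "Suc i' = i \<and> row_len p i' = row_len p i"
    using adjacent assms beta_add_index[of i r p] beta_add_index[of i' r p] by auto
next
  assume "Suc i' = i \<and> row_len p i' = row_len p i"
  then show "beta r p i' = Suc (beta r p i)"
    using assms beta_add_index[of i r p] beta_add_index[of i' r p] by auto
qed

lemma Suc_beta_mem_iff:
  assumes "is_partition p" "1 \<le> i" "i \<le> sharp_length r p"
  shows "Suc (beta r p i) \<in> beta_set r p \<longleftrightarrow> 1 < i \<and> row_len p (i - 1) = row_len p i"
proof -
  have "Suc (beta r p i) \<in> beta_set r p \<longleftrightarrow> (\<exists>i'\<in>{1..sharp_length r p}. beta r p i' = Suc (beta r p i))"
    unfolding beta_set_def image_iff by (metis (no_types, lifting))
  also have "\<dots> \<longleftrightarrow> (\<exists>i'\<in>{1..sharp_length r p}. Suc i' = i \<and> row_len p i' = row_len p i)"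
    using beta_eq_Suc_beta_iff[OF assms(1), of i r] assms(2,3) by auto
  also have "\<dots> \<longleftrightarrow> 1 < i \<and> row_len p (i - 1) = row_len p i"
    using assms(3) by (cases i) auto
  finally show ?thesis .
qed

lemma pred_beta_mem_iff:
  assumes "is_partition p" "1 \<le> i" "i \<le> sharp_length r p" "0 < beta r p i"
  shows "beta r p i - 1 \<in> beta_set r p \<longleftrightarrow> i < sharp_length r p \<and> row_len p (Suc i) = row_len p i"
proof -
  have "beta r p i - 1 \<in> beta_set r p \<longleftrightarrow> (\<exists>i'\<in>{1..sharp_length r p}. beta r p i = Suc (beta r p i'))"
    unfolding beta_set_def using assms(4) by force
  also have "\<dots> \<longleftrightarrow> (\<exists>i'\<in>{1..sharp_length r p}. Suc i = i' \<and> row_len p i = row_len p i')"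
    using beta_eq_Suc_beta_iff[OF assms(1), of _ r i] assms(2,3) by auto
  also have "\<dots> \<longleftrightarrow> i < sharp_length r p \<and> row_len p (Suc i) = row_len p i"
    by auto
  finally show ?thesis .
qed

lemma beta_parity:
  assumes "1 \<le> i" "i \<le> sharp_length r p"
  shows "(i + row_len p i) mod 2 = r mod 2 \<longleftrightarrow> odd (beta r p i)"
proof -
  have "\<And>b q n :: nat. b + i = q + n \<Longrightarrow> n mod 2 \<noteq> r mod 2 \<Longrightarrow> (i + q) mod 2 = r mod 2 \<longleftrightarrow> odd b"
    by (auto simp: mod2_eq_if split: if_splits) presburger+
  then show ?thesis
    using beta_add_index[OF assms] sharp_length_parity[of r p] by blast
qed

lemma card_even_atMost: "card {c::nat. even c \<and> c \<le> b} \<le> b div 2 + 1"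
proof -
  have "{c::nat. even c \<and> c \<le> b} \<subseteq> (\<lambda>m. 2 * m) ` {..b div 2}"
    by (auto elim!: evenE)
  then have "card {c::nat. even c \<and> c \<le> b} \<le> card ((\<lambda>m. 2 * m) ` {..b div 2})"
    by (rule card_mono[rotated]) simp
  also have "\<dots> \<le> b div 2 + 1"
    using card_image_le[of "{..b div 2}" "\<lambda>m. 2 * m"] by simp
  finally show ?thesis .
qed

lemma card_even_Suc_less: "card {c::nat. even c \<and> Suc c < b} \<le> b div 2"
proof -
  have "{c::nat. even c \<and> Suc c < b} \<subseteq> (\<lambda>m. 2 * m) ` {..<b div 2}"
    by (auto elim!: evenE)
  then have "card {c::nat. even c \<and> Suc c < b} \<le> card ((\<lambda>m. 2 * m) ` {..<b div 2})"
    by (rule card_mono[rotated]) simp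
  also have "\<dots> \<le> b div 2"
    using card_image_le[of "{..<b div 2}" "\<lambda>m. 2 * m"] by simp
  finally show ?thesis .
qed

lemma card_even_beta_le:
  assumes "is_partition p" "1 \<le> i" "i \<le> sharp_length r p"
  shows "card {i' \<in> {1..sharp_length r p}. even (beta r p i')}
    \<le> (i - 1) + card {c \<in> beta_set r p. even c \<and> c \<le> beta r p i}"
proof -
  define later where "later = {i' \<in> {i..sharp_length r p}. even (beta r p i')}"
  have "{i' \<in> {1..sharp_length r p}. even (beta r p i')} \<subseteq> {1..<i} \<union> later"
    unfolding later_def by auto
  then have "card {i' \<in> {1..sharp_length r p}. even (beta r p i')} \<le> card ({1..<i} \<union> later)"
    by (rule card_mono[rotated]) (simp add: later_def)
  also have "\<dots> \<le> (i - 1) + card later"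
    using card_Un_le[of "{1..<i}" later] by simp
  also have "card later = card (beta r p ` later)"
    using inj_on_beta[OF assms(1), of r] assms(2)
    by (intro card_image[symmetric]) (auto simp: later_def intro: inj_on_subset)
  also have "\<dots> \<le> card {c \<in> beta_set r p. even c \<and> c \<le> beta r p i}"
  proof (rule card_mono)
    show "finite {c \<in> beta_set r p. even c \<and> c \<le> beta r p i}"
      by simp
    show "beta r p ` later \<subseteq> {c \<in> beta_set r p. even c \<and> c \<le> beta r p i}"
      using assms(2) beta_strict_antimono[OF assms(1), of i _ r]
      by (auto simp: later_def beta_set_def le_less)
  qed
  finally show ?thesis
    by simp
qed

section \<open>Corners of a Young diagram\<close>

lemma is_youngI:
  assumes "finite S" "\<And>a b. (a, b) \<in> S \<Longrightarrow> 1 \<le> a \<and> 1 \<le> b"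
    and "\<And>a b a' b'. (a, b) \<in> S \<Longrightarrow> 1 \<le> a' \<Longrightarrow> a' \<le> a \<Longrightarrow> 1 \<le> b' \<Longrightarrow> b' \<le> b \<Longrightarrow> (a', b') \<in> S"
  shows "is_young S"
  using assms unfolding is_young_def by blast

lemma removable_corner_iff:
  assumes "is_partition p"
  shows "(i, j) \<in> young_diagram p \<and> is_young (young_diagram p - {(i, j)}) \<longleftrightarrow>
    1 \<le> i \<and> 1 \<le> j \<and> j = row_len p i \<and> row_len p (Suc i) < j"
proof
  let ?Y = "young_diagram p - {(i, j)}"
  assume removable: "(i, j) \<in> young_diagram p \<and> is_young ?Y"
  then have ij: "1 \<le> i" "1 \<le> j" "j \<le> row_len p i"
    by (auto simp: mem_young_diagram_iff)
  have down_closed: "(a, b) \<in> ?Y \<Longrightarrow> 1 \<le> a' \<Longrightarrow> a' \<le> a \<Longrightarrow> 1 \<le> b' \<Longrightarrow> b' \<le> b \<Longrightarrow> (a', b') \<in> ?Y"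
    for a b a' b'
    using removable unfolding is_young_def by blast
  have "\<not> j < row_len p i"
  proof
    assume "j < row_len p i"
    then have "(i, Suc j) \<in> ?Y"
      using ij by (auto simp: mem_young_diagram_iff)
    from down_closed[OF this, of i j] ij show False by auto
  qed
  moreover have "\<not> j \<le> row_len p (Suc i)"
  proof
    assume "j \<le> row_len p (Suc i)"
    then have "(Suc i, j) \<in> ?Y"
      using ij by (auto simp: mem_young_diagram_iff)
    from down_closed[OF this, of i j] ij show False by auto
  qed
  ultimately show "1 \<le> i \<and> 1 \<le> j \<and> j = row_len p i \<and> row_len p (Suc i) < j"
    using ij by auto
next
  assume corner: "1 \<le> i \<and> 1 \<le> j \<and> j = row_len p i \<and> row_len p (Suc i) < j"
  have closed: "(a', b') \<in> young_diagram p - {(i, j)}"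
    if ab: "(a, b) \<in> young_diagram p - {(i, j)}" "1 \<le> a'" "a' \<le> a" "1 \<le> b'" "b' \<le> b" for a b a' b'
  proof -
    have "row_len p a \<le> row_len p a'"
      using row_len_antimono[OF assms] that by blast
    moreover have "(a', b') \<noteq> (i, j)"
    proof
      assume "(a', b') = (i, j)"
      then have "j \<le> b"
        using ab(5) by simp
      then have "Suc i \<le> a"
        using ab \<open>(a', b') = (i, j)\<close> corner by (cases "a = i") (auto simp: mem_young_diagram_iff)
      then show False
        using ab \<open>j \<le> b\<close> corner row_len_antimono[OF assms, of "Suc i" a]
        by (auto simp: mem_young_diagram_iff)
    qed
    ultimately show ?thesis
      using ab by (auto simp: mem_young_diagram_iff)
  qed
  have "is_young (young_diagram p - {(i, j)})"
    by (rule is_youngI[OF _ _ closed]) (auto simp: finite_young_diagram mem_young_diagram_iff)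
  then show "(i, j) \<in> young_diagram p \<and> is_young (young_diagram p - {(i, j)})"
    using corner by (auto simp: mem_young_diagram_iff)
qed

lemma addable_corner_iff:
  assumes "is_partition p" "1 \<le> i" "1 \<le> j"
  shows "(i, j) \<notin> young_diagram p \<and> is_young (insert (i, j) (young_diagram p)) \<longleftrightarrow>
    j = row_len p i + 1 \<and> (i = 1 \<or> j \<le> row_len p (i - 1))"
proof
  let ?Y = "insert (i, j) (young_diagram p)"
  assume addable: "(i, j) \<notin> young_diagram p \<and> is_young ?Y"
  then have "row_len p i < j"
    using assms by (auto simp: mem_young_diagram_iff)
  have down_closed: "1 \<le> a' \<Longrightarrow> a' \<le> i \<Longrightarrow> 1 \<le> b' \<Longrightarrow> b' \<le> j \<Longrightarrow> (a', b') \<in> ?Y" for a' b'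
    using addable unfolding is_young_def by blast
  have "\<not> row_len p i + 1 < j"
  proof
    assume "row_len p i + 1 < j"
    then show False
      using down_closed[of i "row_len p i + 1"] assms by (auto simp: mem_young_diagram_iff)
  qed
  moreover have "\<not> (i \<noteq> 1 \<and> row_len p (i - 1) < j)"
  proof
    assume "i \<noteq> 1 \<and> row_len p (i - 1) < j"
    moreover have "(i - 1, j) \<in> ?Y"
      using down_closed[of "i - 1" j] assms calculation by auto
    ultimately show False
      using assms by (auto simp: mem_young_diagram_iff)
  qed
  ultimately show "j = row_len p i + 1 \<and> (i = 1 \<or> j \<le> row_len p (i - 1))"
    using \<open>row_len p i < j\<close> by auto
next
  assume corner: "j = row_len p i + 1 \<and> (i = 1 \<or> j \<le> row_len p (i - 1))"
  have closed: "(a', b') \<in> insert (i, j) (young_diagram p)"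
    if ab: "(a, b) \<in> insert (i, j) (young_diagram p)" "1 \<le> a'" "a' \<le> a" "1 \<le> b'" "b' \<le> b" for a b a' b'
  proof (cases "(a, b) = (i, j)")
    case True
    show ?thesis
    proof (cases "a' = i")
      case True
      then show ?thesis
        using \<open>(a, b) = (i, j)\<close> ab corner by (cases "b' = j") (auto simp: mem_young_diagram_iff)
    next
      case False
      then have "a' \<le> i - 1" "i \<noteq> 1"
        using \<open>(a, b) = (i, j)\<close> ab by auto
      then show ?thesis
        using \<open>(a, b) = (i, j)\<close> ab corner row_len_antimono[OF assms(1), of a' "i - 1"]
        by (auto simp: mem_young_diagram_iff)
    qed
  next
    case False
    then show ?thesis
      using ab row_len_antimono[OF assms(1), of a' a] by (auto simp: mem_young_diagram_iff)
  qed
  have "is_young (insert (i, j) (young_diagram p))"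
    by (rule is_youngI[OF _ _ closed]) (use assms in \<open>auto simp: finite_young_diagram mem_young_diagram_iff\<close>)
  then show "(i, j) \<notin> young_diagram p \<and> is_young (insert (i, j) (young_diagram p))"
    using corner by (auto simp: mem_young_diagram_iff)
qed

lemma HC_iff:
  assumes "is_partition p"
  shows "(i, j) \<in> HC r p \<longleftrightarrow> 1 \<le> i \<and> 1 \<le> j \<and> (i + j) mod 2 = r mod 2 \<and> r + 1 < i + j \<and>
    ((j = row_len p i + 1 \<and> (i = 1 \<or> j \<le> row_len p (i - 1))) \<or>
     (j = row_len p i \<and> row_len p (Suc i) < j))"
  unfolding HC_def using removable_corner_iff[OF assms, of i j] addable_corner_iff[OF assms, of i j]
  by auto

section \<open>The symbol and the rows ending in a square of HC(p)\<close>

lemma mem_sym_top_iff: "x \<in> sym_top r p \<longleftrightarrow> 2 * x \<in> beta_set r p"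
proof
  assume "x \<in> sym_top r p"
  then obtain i where "i \<in> {1..sharp_length r p}" "even (beta r p i)" "x = beta r p i div 2"
    unfolding sym_top_def by auto
  then show "2 * x \<in> beta_set r p"
    unfolding beta_set_def by auto
next
  assume "2 * x \<in> beta_set r p"
  then obtain i where "i \<in> {1..sharp_length r p}" "beta r p i = 2 * x"
    unfolding beta_set_def by auto
  then show "x \<in> sym_top r p"
    unfolding sym_top_def by force
qed

lemma mem_sym_bot_iff: "x \<in> sym_bot r p \<longleftrightarrow> Suc (2 * x) \<in> beta_set r p"
proof
  assume "x \<in> sym_bot r p"
  then obtain i where "i \<in> {1..sharp_length r p}" "odd (beta r p i)" "x = (beta r p i - 1) div 2"
    unfolding sym_bot_def by auto
  then show "Suc (2 * x) \<in> beta_set r p"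
    unfolding beta_set_def by (auto elim!: oddE)
next
  assume "Suc (2 * x) \<in> beta_set r p"
  then obtain i where "i \<in> {1..sharp_length r p}" "beta r p i = Suc (2 * x)"
    unfolding beta_set_def by auto
  then show "x \<in> sym_bot r p"
    unfolding sym_bot_def by force
qed

lemma mem_Z1_symbol_iff:
  "x \<in> Z1 (sym_top r p) (sym_bot r p) \<longleftrightarrow> (2 * x \<in> beta_set r p) \<noteq> (Suc (2 * x) \<in> beta_set r p)"
  by (auto simp: Z1_def mem_sym_top_iff mem_sym_bot_iff)

lemma HC_row_le_sharp_length:
  assumes "is_partition p" "(i, j) \<in> HC r p"
  shows "i \<le> sharp_length r p"
proof (rule ccontr)
  assume beyond: "\<not> i \<le> sharp_length r p"
  then have "row_len p i = 0"
    using sharp_length_bounds(1)[of p r] by (auto simp: row_len_def)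
  then have corner: "j = 1" "i = 1 \<or> 1 \<le> row_len p (i - 1)" "(i + j) mod 2 = r mod 2"
    using HC_iff[OF assms(1)] assms(2) by auto
  then have "i - 1 \<le> length p"
    using row_len_pos_iff[OF assms(1), of "i - 1"] by auto
  then have "i = Suc (length p)" "sharp_length r p = length p"
    using beyond sharp_length_bounds(1)[of p r] sharp_length_bounds(2)[of r p] by auto
  then show False
    using corner sharp_length_parity[of r p] by simp
qed

lemma mem_HC_rows_iff:
  "i \<in> HC_rows r p \<longleftrightarrow> 1 \<le> i \<and> i \<le> sharp_length r p \<and>
    ((i, row_len p i) \<in> HC r p \<or> (i, Suc (row_len p i)) \<in> HC r p)"
  unfolding HC_rows_def by (auto simp: part_psharp)

lemma even_row_next_square_outside_staircase:
  assumes "has_rank r p" "1 \<le> i" "i \<le> sharp_length r p" "even (beta r p i)"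
  shows "r + 1 < i + Suc (row_len p i)"
proof -
  have part: "is_partition p"
    using assms(1) by (simp add: has_rank_def)
  have "card {c \<in> beta_set r p. even c \<and> c \<le> beta r p i} \<le> card {c. even c \<and> c \<le> beta r p i}"
    by (rule card_mono) auto
  then have "sharp_length r p + r + 1 \<le> 2 * (i - 1) + 2 * (beta r p i div 2) + 2"
    using card_even_beta[OF assms(1)] card_even_beta_le[OF part assms(2,3)]
      card_even_atMost[of "beta r p i"] by linarith
  then show ?thesis
    using beta_add_index[OF assms(2,3)] assms(2,4) by (auto elim!: evenE)
qed

lemma odd_row_end_outside_staircase:
  assumes "has_rank r p" "1 \<le> i" "i \<le> sharp_length r p" "odd (beta r p i)"
    and gap: "beta r p i - 1 \<notin> beta_set r p"
  shows "r + 1 < i + row_len p i"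
proof -
  have part: "is_partition p"
    using assms(1) by (simp add: has_rank_def)
  have "Suc c < beta r p i" if "c \<in> beta_set r p" "even c" "c \<le> beta r p i" for c
  proof -
    have "c \<noteq> beta r p i" "c \<noteq> beta r p i - 1"
      using that gap assms(4) by auto
    then show ?thesis
      using that(3) by linarith
  qed
  then have "{c \<in> beta_set r p. even c \<and> c \<le> beta r p i} \<subseteq> {c. even c \<and> Suc c < beta r p i}"
    by blast
  then have "card {c \<in> beta_set r p. even c \<and> c \<le> beta r p i} \<le> card {c. even c \<and> Suc c < beta r p i}"
    by (rule card_mono[rotated]) (rule finite_subset[of _ "{..<beta r p i}"], auto)
  then have "sharp_length r p + r + 1 \<le> 2 * (i - 1) + 2 * (beta r p i div 2)"
    using card_even_beta[OF assms(1)] card_even_beta_le[OF part assms(2,3)]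
      card_even_Suc_less[of "beta r p i"] by linarith
  then show ?thesis
    using beta_add_index[OF assms(2,3)] assms(2,4) by (auto elim!: oddE)
qed

lemma odd_beta_row_nonempty:
  assumes "is_partition p" "1 \<le> i" "i \<le> sharp_length r p" "odd (beta r p i)"
  shows "0 < row_len p i"
proof (rule ccontr)
  assume empty: "\<not> 0 < row_len p i"
  then have "i = sharp_length r p"
    using row_len_pos_iff[OF assms(1), of i] assms(2,3) sharp_length_bounds(2)[of r p] by auto
  then show False
    using beta_add_index[OF assms(2,3)] empty assms(4) by simp
qed

lemma even_row_mem_HC_rows_iff:
  assumes "has_rank r p" "1 \<le> i" "i \<le> sharp_length r p" "even (beta r p i)"
  shows "i \<in> HC_rows r p \<longleftrightarrow> Suc (beta r p i) \<notin> beta_set r p"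
proof -
  have part: "is_partition p"
    using assms(1) by (simp add: has_rank_def)
  have parity: "(i + row_len p i) mod 2 \<noteq> r mod 2" "(i + Suc (row_len p i)) mod 2 = r mod 2"
    using beta_parity[OF assms(2,3)] assms(4) by (auto simp: mod2_eq_if split: if_splits)
  have "(i, Suc (row_len p i)) \<in> HC r p \<longleftrightarrow> i = 1 \<or> Suc (row_len p i) \<le> row_len p (i - 1)"
    using HC_iff[OF part] parity even_row_next_square_outside_staircase[OF assms] assms(2) by auto
  also have "\<dots> \<longleftrightarrow> Suc (beta r p i) \<notin> beta_set r p"
  proof -
    have "i \<noteq> 1 \<Longrightarrow> row_len p i \<le> row_len p (i - 1)"
      using row_len_antimono[OF part, of "i - 1" i] assms(2) by simp
    then show ?thesis
      using Suc_beta_mem_iff[OF part assms(2,3)] assms(2) by (cases "i = 1") auto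
  qed
  finally show ?thesis
    using HC_iff[OF part] parity assms(2,3) by (auto simp: mem_HC_rows_iff)
qed

lemma odd_row_mem_HC_rows_iff:
  assumes "has_rank r p" "1 \<le> i" "i \<le> sharp_length r p" "odd (beta r p i)"
  shows "i \<in> HC_rows r p \<longleftrightarrow> beta r p i - 1 \<notin> beta_set r p"
proof -
  have part: "is_partition p"
    using assms(1) by (simp add: has_rank_def)
  have parity: "(i + row_len p i) mod 2 = r mod 2" "(i + Suc (row_len p i)) mod 2 \<noteq> r mod 2"
    using beta_parity[OF assms(2,3)] assms(4) by (auto simp: mod2_eq_if split: if_splits)
  have filled: "0 < row_len p i"
    using odd_beta_row_nonempty[OF part assms(2-4)] .
  have "row_len p (Suc i) < row_len p i \<longleftrightarrow> beta r p i - 1 \<notin> beta_set r p"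
  proof (cases "i < sharp_length r p")
    case True
    then show ?thesis
      using pred_beta_mem_iff[OF part assms(2,3)] assms(4) row_len_antimono[OF part assms(2), of "Suc i"]
      by (auto simp: odd_pos)
  next
    case False
    then have "row_len p (Suc i) = 0"
      using assms(3) sharp_length_bounds(1)[of p r] by (simp add: row_len_def)
    then show ?thesis
      using pred_beta_mem_iff[OF part assms(2,3)] assms(4) filled False by (auto simp: odd_pos)
  qed
  then have "(i, row_len p i) \<in> HC r p \<longleftrightarrow> beta r p i - 1 \<notin> beta_set r p"
    using HC_iff[OF part] parity filled assms(2) odd_row_end_outside_staircase[OF assms] by auto
  then show ?thesis
    using HC_iff[OF part] parity assms(2,3) by (auto simp: mem_HC_rows_iff)
qed

lemma mem_HC_rows_iff_ptilde_mem_Z1: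
  assumes "has_rank r p" "1 \<le> i" "i \<le> sharp_length r p"
  shows "i \<in> HC_rows r p \<longleftrightarrow> ptilde r p i \<in> Z1 (sym_top r p) (sym_bot r p)"
proof -
  have "beta r p i \<in> beta_set r p"
    using assms(2,3) by (simp add: beta_set_def)
  then show ?thesis
    using even_row_mem_HC_rows_iff[OF assms] odd_row_mem_HC_rows_iff[OF assms]
    by (cases "even (beta r p i)") (auto simp: ptilde_def mem_Z1_symbol_iff elim!: evenE oddE)
qed

lemma inj_on_ptilde_HC_rows:
  assumes "has_rank r p"
  shows "inj_on (ptilde r p) (HC_rows r p)"
proof (rule inj_onI, rule ccontr)
  fix i i' assume rows: "i \<in> HC_rows r p" "i' \<in> HC_rows r p"
    and same: "ptilde r p i = ptilde r p i'" and "i \<noteq> i'"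
  have halves: "a \<in> {2 * (a div 2), Suc (2 * (a div 2))}" for a :: nat
    by (cases "even a") auto
  have "is_partition p"
    using assms by (simp add: has_rank_def)
  then have "beta r p i \<noteq> beta r p i'"
    using inj_on_beta[of p r] rows \<open>i \<noteq> i'\<close> by (auto simp: mem_HC_rows_iff inj_on_def)
  moreover have "beta r p i \<in> beta_set r p" "beta r p i' \<in> beta_set r p"
    using rows by (auto simp: mem_HC_rows_iff beta_set_def)
  ultimately have "2 * ptilde r p i \<in> beta_set r p" "Suc (2 * ptilde r p i) \<in> beta_set r p"
    using halves[of "beta r p i"] halves[of "beta r p i'"] same unfolding ptilde_def by auto
  then show False
    using rows(1) mem_HC_rows_iff_ptilde_mem_Z1[OF assms] by (auto simp: mem_HC_rows_iff mem_Z1_symbol_iff)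
qed

lemma bij_betw_ptilde_HC_rows:
  assumes "has_rank r p"
  shows "bij_betw (ptilde r p) (HC_rows r p) (Z1 (sym_top r p) (sym_bot r p))"
  unfolding bij_betw_def
proof
  show "inj_on (ptilde r p) (HC_rows r p)"
    using inj_on_ptilde_HC_rows[OF assms] .
  show "ptilde r p ` HC_rows r p = Z1 (sym_top r p) (sym_bot r p)"
  proof
    show "ptilde r p ` HC_rows r p \<subseteq> Z1 (sym_top r p) (sym_bot r p)"
    proof
      fix x assume "x \<in> ptilde r p ` HC_rows r p"
      then obtain i where "i \<in> HC_rows r p" "x = ptilde r p i"
        by blast
      moreover have "1 \<le> i" "i \<le> sharp_length r p"
        using calculation(1) mem_HC_rows_iff by blast+
      ultimately show "x \<in> Z1 (sym_top r p) (sym_bot r p)"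
        using mem_HC_rows_iff_ptilde_mem_Z1[OF assms] by blast
    qed
  next
    show "Z1 (sym_top r p) (sym_bot r p) \<subseteq> ptilde r p ` HC_rows r p"
    proof
      fix x assume x: "x \<in> Z1 (sym_top r p) (sym_bot r p)"
      then have "2 * x \<in> beta_set r p \<or> Suc (2 * x) \<in> beta_set r p"
        unfolding mem_Z1_symbol_iff by blast
      then obtain i where i: "1 \<le> i" "i \<le> sharp_length r p" "beta r p i \<in> {2 * x, Suc (2 * x)}"
        unfolding beta_set_def by fastforce
      then have "ptilde r p i = x"
        by (auto simp: ptilde_def)
      then show "x \<in> ptilde r p ` HC_rows r p"
        using mem_HC_rows_iff_ptilde_mem_Z1[OF assms i(1,2)] x by auto
    qed
  qed
qed

lemma bij_betw_row_end_square:
  assumes "is_partition p"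
  shows "bij_betw (row_end_square r p) (HC_rows r p) (HC r p)"
  unfolding bij_betw_def
proof
  show "inj_on (row_end_square r p) (HC_rows r p)"
    by (rule inj_onI) (metis fst_conv row_end_square_def)
  show "row_end_square r p ` HC_rows r p = HC r p"
  proof
    show "row_end_square r p ` HC_rows r p \<subseteq> HC r p"
      unfolding HC_rows_def row_end_square_def by auto
  next
    show "HC r p \<subseteq> row_end_square r p ` HC_rows r p"
    proof
      fix s assume s: "s \<in> HC r p"
      then obtain i j where ij: "s = (i, j)"
        by fastforce
      then have corner: "1 \<le> i" "(i + j) mod 2 = r mod 2" "j = row_len p i \<or> j = Suc (row_len p i)"
        using s HC_iff[OF assms] by auto
      moreover have "i \<le> sharp_length r p"
        using HC_row_le_sharp_length[OF assms] s ij by blast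
      ultimately have "i \<in> HC_rows r p" "part (psharp r p) i = row_len p i"
        using s ij by (auto simp: mem_HC_rows_iff part_psharp)
      moreover have "(i, row_len p i) \<in> HC r p \<Longrightarrow> j = row_len p i"
      proof -
        have "Suc (i + row_len p i) mod 2 \<noteq> (i + row_len p i) mod 2"
          by presburger
        then show "(i, row_len p i) \<in> HC r p \<Longrightarrow> j = row_len p i"
          using corner HC_iff[OF assms, of i "row_len p i" r] by auto
      qed
      then have "row_end_square r p i = (i, j)"
        using corner s ij \<open>part (psharp r p) i = row_len p i\<close> by (auto simp: row_end_square_def)
      ultimately show "s \<in> row_end_square r p ` HC_rows r p"
        using ij by (metis imageI)
    qed
  qed
qed

theorem mainTheorem3:
  fixes r :: nat and p :: "nat list"
  assumes "has_rank r p"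
  shows "bij_betw (ptilde r p) (HC_rows r p) (Z1 (sym_top r p) (sym_bot r p)) \<and>
         bij_betw (row_end_square r p) (HC_rows r p) (HC r p) \<and>
         (\<exists>f. bij_betw f (Z1 (sym_top r p) (sym_bot r p)) (HC r p))"
proof -
  have symbol_rows: "bij_betw (ptilde r p) (HC_rows r p) (Z1 (sym_top r p) (sym_bot r p))"
    using bij_betw_ptilde_HC_rows[OF assms] .
  moreover have rows_HC: "bij_betw (row_end_square r p) (HC_rows r p) (HC r p)"
    using assms by (intro bij_betw_row_end_square) (simp add: has_rank_def)
  moreover have "bij_betw (row_end_square r p \<circ> inv_into (HC_rows r p) (ptilde r p))
      (Z1 (sym_top r p) (sym_bot r p)) (HC r p)"
    using bij_betw_trans[OF bij_betw_inv_into[OF symbol_rows] rows_HC] .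
  ultimately show ?thesis
    by blast
qed

end
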